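(* Let $X$ be a Banach space such that every bounded linear operator $A:X\to X$ is of the form $A=\lambda I+S$ with $\lambda\in\mathbb{R}$ and $S$ strictly singular. Then $X$ is UALS-saturated.
   Context: $\mathcal{L}(X)$ is the space of bounded linear operators on $X$ with the operator norm. An operator is strictly singular if its restriction to no infinite-dimensional closed subspace is an isomorphism onto its image. Here "subspace" means closed infinite-dimensional subspace. $X$ is UALS-saturated if there exists $C>0$ such that for every convex (norm-)compact $W\subset\mathcal{L}(X)$, every $A\in\mathcal{L}(X)$ and $\varepsilon>0$ with the property that for every $x$ in the unit ball of $X$ there is $B\in W$ with $\|(A-B)x\|\le\varepsilon$, it holds that for every subspace $Y$ of $X$ there exist a further subspace $Z\subset Y$ and $B\in W$ with $\|(A-B)|_Z\|_{\mathcal{L}(Z,X)}\le C\varepsilon$. *)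

theory Defs
  imports "HOL-Analysis.Analysis"
begin

definition inf_dim :: "'a::real_vector set \<Rightarrow> bool" where
  "inf_dim Y \<longleftrightarrow> \<not> (\<exists>B. finite B \<and> Y \<subseteq> span B)"

text \<open>"Subspace" in the paper: closed infinite-dimensional linear subspace.\<close>
definition inf_subspace :: "'a::real_normed_vector set \<Rightarrow> bool" where
  "inf_subspace Y \<longleftrightarrow> subspace Y \<and> closed Y \<and> inf_dim Y"

definition iso_onto_image :: "('a::real_normed_vector \<Rightarrow>\<^sub>L 'b::real_normed_vector) \<Rightarrow> 'a set \<Rightarrow> bool" where
  "iso_onto_image T Y \<longleftrightarrow> inj_on (blinfun_apply T) Y \<and>
     (\<exists>K. \<forall>y\<in>Y. norm y \<le> K * norm (blinfun_apply T y))"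

definition strictly_singular :: "('a::real_normed_vector \<Rightarrow>\<^sub>L 'b::real_normed_vector) \<Rightarrow> bool" where
  "strictly_singular T \<longleftrightarrow> \<not> (\<exists>Y. inf_subspace Y \<and> iso_onto_image T Y)"

definition UALS_saturated :: "'a::banach itself \<Rightarrow> bool" where
  "UALS_saturated TYPE('a) \<longleftrightarrow>
    (\<exists>C>0. \<forall>(W :: ('a \<Rightarrow>\<^sub>L 'a) set) (A :: 'a \<Rightarrow>\<^sub>L 'a) (\<epsilon>::real).
       convex W \<and> compact W \<and> \<epsilon> > 0 \<and>
       (\<forall>x::'a. norm x \<le> 1 \<longrightarrow> (\<exists>B\<in>W. norm (blinfun_apply (A - B) x) \<le> \<epsilon>)) \<longrightarrow>
       (\<forall>Y. inf_subspace Y \<longrightarrow>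
          (\<exists>Z B. inf_subspace Z \<and> Z \<subseteq> Y \<and> B \<in> W \<and>
                 (\<forall>z\<in>Z. norm (blinfun_apply (A - B) z) \<le> C * \<epsilon> * norm z))))"

end

theory Submission
  imports Defs
begin

text \<open>Every operator on \<open>X\<close> is \<open>\<lambda>I + S\<close> with \<open>S\<close> strictly singular, and a strictly singular
  operator becomes arbitrarily small on a further subspace of any subspace: one builds a normalized
  sequence \<open>x\<^sub>j\<close> with \<open>\<parallel>S x\<^sub>j\<parallel>\<close> rapidly decreasing and biorthogonal functionals of norm at most
  \<open>2\<^sup>j\<close> (Hahn-Banach), and takes its closed span. Given \<open>W\<close>, \<open>A\<close> and \<open>\<epsilon>\<close>, choose a finite
  \<open>\<epsilon>/5\<close>-net of the compact set \<open>W\<close> and a subspace \<open>Z\<close> on which the strictly singular parts of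
  \<open>A\<close> and of all net points are \<open>\<epsilon>/5\<close>-small. On \<open>Z\<close> every \<open>A - B\<close> is then close to a multiple of
  the identity, and testing the hypothesis at a single unit vector of \<open>Z\<close> bounds that multiple,
  which gives the constant \<open>C = 2\<close>.\<close>

section \<open>Hahn-Banach for functionals dominated by a multiple of the norm\<close>

text \<open>Graphs of linear functionals defined on a subspace; single-valuedness is a consequence
  of the domination.\<close>

definition dominated_graph :: "real \<Rightarrow> ('a::real_normed_vector \<times> real) set \<Rightarrow> bool" where
  "dominated_graph K G \<longleftrightarrow> (0, 0) \<in> G \<and>
     (\<forall>a r b s. (a, r) \<in> G \<longrightarrow> (b, s) \<in> G \<longrightarrow> (a + b, r + s) \<in> G) \<and>
     (\<forall>a r c. (a, r) \<in> G \<longrightarrow> (c *\<^sub>R a, c * r) \<in> G) \<and>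
     (\<forall>a r. (a, r) \<in> G \<longrightarrow> r \<le> K * norm a)"

lemma dominated_graph_unique:
  assumes G: "dominated_graph K G" and "(a, r) \<in> G" "(a, s) \<in> G"
  shows "r = s"
proof -
  have "r - s \<le> 0" if "(a, r) \<in> G" "(a, s) \<in> G" for r s
  proof -
    have "(-1 *\<^sub>R a, -1 * s) \<in> G" using G that(2) unfolding dominated_graph_def by blast
    then have "(a + -1 *\<^sub>R a, r + -1 * s) \<in> G" using G that(1) unfolding dominated_graph_def by blast
    then show ?thesis using G unfolding dominated_graph_def by fastforce
  qed
  from this[OF assms(2,3)] this[OF assms(3,2)] show ?thesis by simp
qed

text \<open>The classical one-dimensional step of Hahn-Banach: the value at \<open>u\<close> must lie between
  these two families of bounds, and subadditivity of the norm makes them compatible.\<close>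

lemma dominated_graph_extension_value:
  assumes G: "dominated_graph K G" and K: "K \<ge> 0"
  obtains c where "\<And>b s. (b, s) \<in> G \<Longrightarrow> s - K * norm (b - u) \<le> c"
    and "\<And>a r. (a, r) \<in> G \<Longrightarrow> c \<le> K * norm (a + u) - r"
proof -
  define L where "L = (\<lambda>(b, s). s - K * norm (b - u)) ` G"
  have compatible: "s - K * norm (b - u) \<le> K * norm (a + u) - r"
    if "(a, r) \<in> G" "(b, s) \<in> G" for a r b s
  proof -
    have "r + s \<le> K * norm (a + b)" using G that unfolding dominated_graph_def by blast
    also have "norm (a + b) \<le> norm (a + u) + norm (b - u)"
      using norm_triangle_ineq[of "a + u" "b - u"] by simp
    then have "K * norm (a + b) \<le> K * norm (a + u) + K * norm (b - u)"
      using K by (metis distrib_left mult_left_mono)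
    finally show ?thesis by simp
  qed
  have "(0, 0) \<in> G" using G unfolding dominated_graph_def by blast
  then have "L \<noteq> {}" and "bdd_above L"
    using compatible unfolding L_def bdd_above_def by fastforce+
  show ?thesis
  proof
    show "s - K * norm (b - u) \<le> Sup L" if "(b, s) \<in> G" for b s
      using \<open>bdd_above L\<close> that by (intro cSup_upper) (auto simp: L_def)
    show "Sup L \<le> K * norm (a + u) - r" if "(a, r) \<in> G" for a r
      using \<open>L \<noteq> {}\<close> compatible[OF that] by (intro cSup_least) (auto simp: L_def)
  qed
qed

lemma dominated_graph_extension_bound:
  assumes G: "dominated_graph K G" and K: "K \<ge> 0" and "(a, r) \<in> G"
    and lower: "\<And>b s. (b, s) \<in> G \<Longrightarrow> s - K * norm (b - u) \<le> c"
    and upper: "\<And>a r. (a, r) \<in> G \<Longrightarrow> c \<le> K * norm (a + u) - r"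
  shows "r + t * c \<le> K * norm (a + t *\<^sub>R u)"
proof -
  have scaled: "(d *\<^sub>R a, d * r) \<in> G" for d
    using G \<open>(a, r) \<in> G\<close> unfolding dominated_graph_def by blast
  consider "t = 0" | "t > 0" | "t < 0" by linarith
  then show ?thesis
  proof cases
    case 1
    then show ?thesis using G \<open>(a, r) \<in> G\<close> unfolding dominated_graph_def by auto
  next
    case 2
    have "(1 / t) *\<^sub>R a + u = (1 / t) *\<^sub>R (a + t *\<^sub>R u)"
      using 2 by (simp add: scaleR_right_distrib)
    then have "c \<le> K * (norm (a + t *\<^sub>R u) / t) - r / t"
      using 2 upper[OF scaled[of "1 / t"]] by simp
    then show ?thesis using 2 by (simp add: field_simps)
  next
    case 3
    have "(- 1 / t) *\<^sub>R a - u = (- 1 / t) *\<^sub>R (a + t *\<^sub>R u)"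
      using 3 by (simp add: scaleR_right_distrib)
    then have "- r / t - K * (norm (a + t *\<^sub>R u) / - t) \<le> c"
      using 3 lower[OF scaled[of "- 1 / t"]] by simp
    then show ?thesis using 3 by (simp add: field_simps)
  qed
qed

lemma dominated_graph_extend:
  assumes G: "dominated_graph K G" and K: "K \<ge> 0"
  obtains G' c where "dominated_graph K G'" "G \<subseteq> G'" "(u, c) \<in> G'"
proof -
  obtain c where lower: "\<And>b s. (b, s) \<in> G \<Longrightarrow> s - K * norm (b - u) \<le> c"
    and upper: "\<And>a r. (a, r) \<in> G \<Longrightarrow> c \<le> K * norm (a + u) - r"
    using dominated_graph_extension_value[OF G K] by blast
  define G' where "G' = (\<lambda>((a, r), t). (a + t *\<^sub>R u, r + t * c)) ` (G \<times> UNIV)"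
  have mem: "(a + t *\<^sub>R u, r + t * c) \<in> G'" if "(a, r) \<in> G" for a r t
    unfolding G'_def using that by (auto intro!: image_eqI[where x="((a, r), t)"])
  have memE: "\<exists>a r t. (a, r) \<in> G \<and> b = a + t *\<^sub>R u \<and> s = r + t * c" if "(b, s) \<in> G'" for b s
    using that unfolding G'_def by auto
  have "dominated_graph K G'"
    unfolding dominated_graph_def
  proof (intro conjI allI impI)
    show "(0, 0) \<in> G'" using mem[of 0 0 0] G unfolding dominated_graph_def by auto
  next
    fix b s b' s' assume "(b, s) \<in> G'" "(b', s') \<in> G'"
    then obtain a r t a' r' t' where "(a, r) \<in> G" "b = a + t *\<^sub>R u" "s = r + t * c"
      "(a', r') \<in> G" "b' = a' + t' *\<^sub>R u" "s' = r' + t' * c" using memE by metis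
    moreover have "(a + a', r + r') \<in> G" using G calculation unfolding dominated_graph_def by blast
    ultimately show "(b + b', s + s') \<in> G'"
      using mem[of "a + a'" "r + r'" "t + t'"] by (simp add: algebra_simps scaleR_add_left)
  next
    fix b s d assume "(b, s) \<in> G'"
    then obtain a r t where "(a, r) \<in> G" "b = a + t *\<^sub>R u" "s = r + t * c" using memE by metis
    moreover have "(d *\<^sub>R a, d * r) \<in> G" using G calculation unfolding dominated_graph_def by blast
    ultimately show "(d *\<^sub>R b, d * s) \<in> G'"
      using mem[of "d *\<^sub>R a" "d * r" "d * t"] by (simp add: algebra_simps scaleR_add_right)
  next
    fix b s assume "(b, s) \<in> G'"
    then obtain a r t where "(a, r) \<in> G" "b = a + t *\<^sub>R u" "s = r + t * c" using memE by metis
    then show "s \<le> K * norm b"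
      using dominated_graph_extension_bound[OF G K _ lower upper] by simp
  qed
  moreover have "G \<subseteq> G'" using mem[of _ _ 0] by auto
  moreover have "(u, c) \<in> G'" using mem[of 0 0 1] G unfolding dominated_graph_def by auto
  ultimately show ?thesis using that by blast
qed

lemma dominated_graph_Union_chain:
  assumes "chain\<^sub>\<subseteq> C" "C \<noteq> {}" "\<And>G. G \<in> C \<Longrightarrow> dominated_graph K G"
  shows "dominated_graph K (\<Union>C)"
  unfolding dominated_graph_def
proof (intro conjI allI impI)
  show "(0, 0) \<in> \<Union>C" using assms(2,3) unfolding dominated_graph_def by blast
next
  fix a r b s assume "(a, r) \<in> \<Union>C" "(b, s) \<in> \<Union>C"
  then obtain G where "G \<in> C" "(a, r) \<in> G" "(b, s) \<in> G"
    using assms(1) unfolding chain_subset_def by blast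
  then show "(a + b, r + s) \<in> \<Union>C" using assms(3) unfolding dominated_graph_def by blast
next
  fix a r c assume "(a, r) \<in> \<Union>C"
  then show "(c *\<^sub>R a, c * r) \<in> \<Union>C" using assms(3) unfolding dominated_graph_def by blast
next
  fix a r assume "(a, r) \<in> \<Union>C"
  then show "r \<le> K * norm a" using assms(3) unfolding dominated_graph_def by blast
qed

lemma dominated_graph_total_functional:
  assumes M: "dominated_graph K M" and total: "\<And>u. \<exists>r. (u, r) \<in> M"
  obtains f where "linear f" "\<And>u. \<bar>f u\<bar> \<le> K * norm u" "\<And>u r. (u, r) \<in> M \<Longrightarrow> f u = r"
proof -
  define f where "f u = (SOME r. (u, r) \<in> M)" for u
  have graph_f: "(u, f u) \<in> M" for u unfolding f_def using total by (rule someI_ex)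
  have f_eq: "f u = r" if "(u, r) \<in> M" for u r
    using dominated_graph_unique[OF M graph_f that] .
  have "linear f"
  proof
    show "f (b1 + b2) = f b1 + f b2" for b1 b2
    proof (rule f_eq)
      show "(b1 + b2, f b1 + f b2) \<in> M"
        using M graph_f[of b1] graph_f[of b2] unfolding dominated_graph_def by blast
    qed
    show "f (r *\<^sub>R b) = r *\<^sub>R f b" for r b
    proof -
      have "(r *\<^sub>R b, r * f b) \<in> M" using M graph_f[of b] unfolding dominated_graph_def by blast
      then show ?thesis using f_eq by simp
    qed
  qed
  moreover have "\<bar>f u\<bar> \<le> K * norm u" for u
  proof -
    have "f v \<le> K * norm v" for v using M graph_f unfolding dominated_graph_def by blast
    from this[of u] this[of "- u"] show ?thesis using linear_neg[OF \<open>linear f\<close>, of u] by simp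
  qed
  ultimately show ?thesis using that f_eq by blast
qed

theorem hahn_banach_dominated_graph:
  fixes G :: "('a::real_normed_vector \<times> real) set"
  assumes G: "dominated_graph K G" and K: "K \<ge> 0"
  obtains f where "linear f" "\<And>u. \<bar>f u\<bar> \<le> K * norm u" "\<And>a r. (a, r) \<in> G \<Longrightarrow> f a = r"
proof -
  define \<G> where "\<G> = {H. dominated_graph K H \<and> G \<subseteq> H}"
  have "\<exists>U\<in>\<G>. \<forall>H\<in>C. H \<subseteq> U" if "C \<in> chains \<G>" for C
  proof (cases "C = {}")
    case True
    then show ?thesis using G unfolding \<G>_def by auto
  next
    case False
    have "C \<subseteq> \<G>" "chain\<^sub>\<subseteq> C" using that unfolding chains_def by auto
    then have "dominated_graph K (\<Union>C)"
      using False by (intro dominated_graph_Union_chain) (auto simp: \<G>_def)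
    moreover have "G \<subseteq> \<Union>C" using False \<open>C \<subseteq> \<G>\<close> unfolding \<G>_def by blast
    ultimately show ?thesis unfolding \<G>_def by blast
  qed
  then have "\<forall>C\<in>chains \<G>. \<exists>U\<in>\<G>. \<forall>H\<in>C. H \<subseteq> U" by blast
  from Zorn_Lemma2[OF this] obtain M where "M \<in> \<G>" and maximal: "\<forall>H\<in>\<G>. M \<subseteq> H \<longrightarrow> H = M"
    by blast
  then have M: "dominated_graph K M" "G \<subseteq> M" unfolding \<G>_def by auto
  have "\<exists>r. (u, r) \<in> M" for u
  proof -
    obtain H c where "dominated_graph K H" "M \<subseteq> H" "(u, c) \<in> H"
      using dominated_graph_extend[OF M(1) K] by blast
    moreover have "H = M" using calculation M(2) maximal unfolding \<G>_def by blast
    ultimately show ?thesis by blast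
  qed
  then obtain f where "linear f" "\<And>u. \<bar>f u\<bar> \<le> K * norm u" "\<And>u r. (u, r) \<in> M \<Longrightarrow> f u = r"
    using dominated_graph_total_functional[OF M(1)] by blast
  then show ?thesis using that M(2) by blast
qed

lemma dominated_graph_distance:
  fixes V :: "'a::real_normed_vector set"
  assumes V: "subspace V" and d: "d > 0" and far: "\<And>v. v \<in> V \<Longrightarrow> d \<le> norm (x - v)"
  shows "dominated_graph (1 / d) {(v + t *\<^sub>R x, t) | v t. v \<in> V}"
    (is "dominated_graph _ ?G")
proof -
  have bound: "t \<le> (1 / d) * norm (v + t *\<^sub>R x)" if "v \<in> V" for v t
  proof (cases "t = 0")
    case False
    have "- ((1 / t) *\<^sub>R v) \<in> V" using V that by (simp add: subspace_neg subspace_scale)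
    then have "d \<le> norm (x - - ((1 / t) *\<^sub>R v))" by (rule far)
    also have "x - - ((1 / t) *\<^sub>R v) = (1 / t) *\<^sub>R (v + t *\<^sub>R x)"
      using False by (simp add: scaleR_add_right)
    finally have "d \<le> norm (v + t *\<^sub>R x) / \<bar>t\<bar>" by simp
    then have "d * \<bar>t\<bar> \<le> norm (v + t *\<^sub>R x)" using False by (simp add: pos_le_divide_eq)
    moreover have "d * t \<le> d * \<bar>t\<bar>" using d by (intro mult_left_mono) auto
    ultimately have "d * t \<le> norm (v + t *\<^sub>R x)" by linarith
    then show ?thesis using d by (simp add: field_simps mult.commute)
  qed (use d in simp)
  show ?thesis
    unfolding dominated_graph_def
  proof (intro conjI allI impI)
    show "(0, 0) \<in> ?G" using V subspace_0 by force
  next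
    fix a r b s assume "(a, r) \<in> ?G" "(b, s) \<in> ?G"
    then obtain v w where "v \<in> V" "a = v + r *\<^sub>R x" "w \<in> V" "b = w + s *\<^sub>R x" by blast
    moreover have "v + w \<in> V" using V calculation by (simp add: subspace_add)
    ultimately show "(a + b, r + s) \<in> ?G" by (force simp: algebra_simps scaleR_add_left)
  next
    fix a r c assume "(a, r) \<in> ?G"
    then obtain v where "v \<in> V" "a = v + r *\<^sub>R x" by blast
    moreover have "c *\<^sub>R v \<in> V" using V calculation by (simp add: subspace_scale)
    ultimately show "(c *\<^sub>R a, c * r) \<in> ?G" by (force simp: scaleR_add_right)
  next
    fix a r assume "(a, r) \<in> ?G"
    then show "r \<le> (1 / d) * norm a" using bound by blast
  qed
qed

lemma separating_functional:
  fixes V :: "'a::real_normed_vector set"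
  assumes V: "subspace V" and d: "d > 0" and far: "\<And>v. v \<in> V \<Longrightarrow> d \<le> norm (x - v)"
  obtains f where "linear f" "\<And>u. \<bar>f u\<bar> \<le> norm u / d" "f x = 1" "\<And>v. v \<in> V \<Longrightarrow> f v = 0"
proof -
  have "1 / d \<ge> 0" using d by simp
  then obtain f where f: "linear f" "\<And>u. \<bar>f u\<bar> \<le> (1 / d) * norm u"
    and on_graph: "\<And>a r. (a, r) \<in> {(v + t *\<^sub>R x, t) | v t. v \<in> V} \<Longrightarrow> f a = r"
    using hahn_banach_dominated_graph[OF dominated_graph_distance[OF V d far]] by blast
  show ?thesis
  proof (rule that)
    show "f x = 1" using on_graph[of x 1] V subspace_0 by force
    show "f v = 0" if "v \<in> V" for v using on_graph[of v 0] that by force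
  qed (use f in auto)
qed

section \<open>Infinite-dimensional subspaces and strictly singular operators\<close>

lemma subspace_closure:
  fixes S :: "'a::real_normed_vector set"
  assumes "subspace S"
  shows "subspace (closure S)"
  unfolding subspace_def
proof (intro conjI ballI allI)
  show "0 \<in> closure S" using assms closure_subset subspace_0 by blast
next
  fix a b assume "a \<in> closure S" "b \<in> closure S"
  then obtain s t where "\<forall>n. s n \<in> S" "s \<longlonglongrightarrow> a" "\<forall>n. t n \<in> S" "t \<longlonglongrightarrow> b"
    unfolding closure_sequential by blast
  then show "a + b \<in> closure S"
    unfolding closure_sequential using assms
    by (intro exI[of _ "\<lambda>n. s n + t n"]) (auto intro: tendsto_add simp: subspace_add)
next
  fix c a assume "a \<in> closure S"
  then obtain s where "\<forall>n. s n \<in> S" "s \<longlonglongrightarrow> a"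
    unfolding closure_sequential by blast
  then show "c *\<^sub>R a \<in> closure S"
    unfolding closure_sequential using assms
    by (intro exI[of _ "\<lambda>n. c *\<^sub>R s n"]) (auto intro: tendsto_scaleR simp: subspace_scale)
qed

lemma inf_dim_Int_kernel:
  fixes f :: "'a::real_vector \<Rightarrow> real"
  assumes Y: "subspace Y" "inf_dim Y" and f: "linear f"
  shows "inf_dim (Y \<inter> {u. f u = 0})"
  unfolding inf_dim_def
proof
  assume "\<exists>B. finite B \<and> Y \<inter> {u. f u = 0} \<subseteq> span B"
  then obtain B where B: "finite B" "Y \<inter> {u. f u = 0} \<subseteq> span B" by blast
  obtain y0 where y0: "y0 \<in> Y" "f y0 \<noteq> 0"
    using B Y(2) unfolding inf_dim_def by blast
  have "Y \<subseteq> span (insert y0 B)"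
  proof
    fix y assume y: "y \<in> Y"
    define w where "w = y - (f y / f y0) *\<^sub>R y0"
    have "w \<in> Y" using Y(1) y y0 unfolding w_def by (simp add: subspace_diff subspace_scale)
    moreover have "f w = 0" using f y0 unfolding w_def by (simp add: linear_diff linear_scale)
    ultimately have "w \<in> span (insert y0 B)" using B(2) span_mono[of B "insert y0 B"] by blast
    moreover have "(f y / f y0) *\<^sub>R y0 \<in> span (insert y0 B)" by (simp add: span_base span_scale)
    ultimately have "w + (f y / f y0) *\<^sub>R y0 \<in> span (insert y0 B)" by (rule span_add)
    then show "y \<in> span (insert y0 B)" unfolding w_def by simp
  qed
  then show False using Y(2) B(1) unfolding inf_dim_def by blast
qed

lemma inf_subspace_Int_kernel:
  fixes f :: "'a::real_normed_vector \<Rightarrow> real"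
  assumes Y: "inf_subspace Y" and f: "linear f" "\<And>u. \<bar>f u\<bar> \<le> K * norm u"
  shows "inf_subspace (Y \<inter> {u. f u = 0})"
proof -
  have "bounded_linear f"
    using f by (intro bounded_linear_intro[of f K]) (auto simp: linear_add linear_scale mult.commute)
  then have "closed {u. f u = 0}"
    by (intro closed_Collect_eq continuous_on_const bounded_linear.continuous_on[OF _ continuous_on_id])
  moreover have "subspace {u. f u = 0}" using f(1) by (rule linear_subspace_kernel)
  ultimately show ?thesis
    using Y inf_dim_Int_kernel[OF _ _ f(1)] unfolding inf_subspace_def
    by (simp add: subspace_inter closed_Int)
qed

lemma inf_subspace_Int_kernels:
  fixes k :: nat
  assumes "inf_subspace Y"
    and "\<And>j. j < k \<Longrightarrow> linear (\<psi> j) \<and> (\<forall>u. \<bar>\<psi> j u\<bar> \<le> M j * norm u)"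
  shows "inf_subspace (Y \<inter> {u. \<forall>j<k. \<psi> j u = 0})"
  using assms(2)
proof (induction k)
  case (Suc k)
  have "Y \<inter> {u. \<forall>j<Suc k. \<psi> j u = 0} = (Y \<inter> {u. \<forall>j<k. \<psi> j u = 0}) \<inter> {u. \<psi> k u = 0}"
    by (auto simp: less_Suc_eq)
  moreover have "inf_subspace (Y \<inter> {u. \<forall>j<k. \<psi> j u = 0})" using Suc by simp
  ultimately show ?case using Suc.prems[of k] inf_subspace_Int_kernel[of _ "\<psi> k" "M k"] by auto
qed (use assms(1) in simp)

lemma inf_subspace_obtain_unit:
  assumes "inf_subspace Y"
  obtains y where "y \<in> Y" "norm y = 1"
proof -
  have "\<not> Y \<subseteq> span {}" using assms unfolding inf_subspace_def inf_dim_def by blast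
  then obtain y where "y \<in> Y" "y \<noteq> 0" by auto
  then show ?thesis
    using assms that[of "(1 / norm y) *\<^sub>R y"] unfolding inf_subspace_def by (simp add: subspace_scale)
qed

lemma strictly_singular_obtain_small_unit:
  assumes S: "strictly_singular S" and Y: "inf_subspace Y" and \<theta>: "\<theta> > 0"
  obtains y where "y \<in> Y" "norm y = 1" "norm (blinfun_apply S y) \<le> \<theta>"
proof -
  obtain y where y: "y \<in> Y" "y \<noteq> 0" "norm (blinfun_apply S y) \<le> \<theta> * norm y"
  proof (cases "inj_on (blinfun_apply S) Y")
    case False
    then obtain a b where "a \<in> Y" "b \<in> Y" "a \<noteq> b" "blinfun_apply S a = blinfun_apply S b"
      unfolding inj_on_def by blast
    moreover have "a - b \<in> Y" using Y calculation unfolding inf_subspace_def by (simp add: subspace_diff)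
    ultimately show ?thesis using that[of "a - b"] \<theta> by (simp add: blinfun.diff_right)
  next
    case True
    then obtain y where "y \<in> Y" "\<not> norm y \<le> (1 / \<theta>) * norm (blinfun_apply S y)"
      using S Y unfolding strictly_singular_def iso_onto_image_def by blast
    then show ?thesis using that[of y] \<theta> by (cases "y = 0") (auto simp: field_simps)
  qed
  have "norm (blinfun_apply S ((1 / norm y) *\<^sub>R y)) \<le> \<theta>"
    using y by (simp add: blinfun.scaleR_right divide_le_eq)
  then show ?thesis
    using y Y that[of "(1 / norm y) *\<^sub>R y"] unfolding inf_subspace_def by (simp add: subspace_scale)
qed

section \<open>Biorthogonal sequences\<close>

definition biorthogonal_upto :: "nat \<Rightarrow> (nat \<Rightarrow> 'a::real_normed_vector) \<Rightarrow> (nat \<Rightarrow> 'a \<Rightarrow> real) \<Rightarrow> bool" where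
  "biorthogonal_upto k x \<psi> \<longleftrightarrow>
     (\<forall>j<k. norm (x j) = 1 \<and> linear (\<psi> j) \<and> (\<forall>u. \<bar>\<psi> j u\<bar> \<le> 2 ^ j * norm u)) \<and>
     (\<forall>i<k. \<forall>j<k. \<psi> j (x i) = (if i = j then 1 else 0))"

lemma biorthogonal_expansion:
  fixes k :: nat
  assumes lin: "\<And>j. j < k \<Longrightarrow> linear (\<psi> j)"
    and bi: "\<And>i j. i < k \<Longrightarrow> j < k \<Longrightarrow> \<psi> j (x i) = (if i = j then 1 else 0)"
    and "v \<in> span (x ` {..<k})"
  shows "v = (\<Sum>j<k. \<psi> j v *\<^sub>R x j)"
  using assms(3)
proof (induction rule: span_induct_alt)
  case base
  then show ?case using lin by (simp add: linear_0)
next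
  case (step c u y)
  then obtain i where i: "i < k" "u = x i" by auto
  have "(\<Sum>j<k. \<psi> j (c *\<^sub>R u + y) *\<^sub>R x j) = (\<Sum>j<k. (c * \<psi> j u) *\<^sub>R x j) + (\<Sum>j<k. \<psi> j y *\<^sub>R x j)"
    using lin by (simp add: linear_add linear_scale scaleR_add_left sum.distrib)
  also have "(\<Sum>j<k. (c * \<psi> j u) *\<^sub>R x j) = (\<Sum>j<k. if j = i then c *\<^sub>R x i else 0)"
    using bi i by (intro sum.cong) auto
  also have "\<dots> = c *\<^sub>R x i" using i(1) by simp
  finally show ?case using i by (simp flip: step.IH)
qed

lemma biorthogonal_upto_distance:
  assumes B: "biorthogonal_upto k x \<psi>" and y: "norm y = 1" "\<forall>j<k. \<psi> j y = 0"
    and v: "v \<in> span (x ` {..<k})"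
  shows "1 / 2 ^ k \<le> norm (y - v)"
proof -
  have coeff: "\<bar>\<psi> j v\<bar> \<le> 2 ^ j * norm (y - v)" if "j < k" for j
  proof -
    have "\<psi> j v = - \<psi> j (y - v)" using B y that unfolding biorthogonal_upto_def by (simp add: linear_diff)
    then show ?thesis using B that unfolding biorthogonal_upto_def by (metis abs_minus_cancel)
  qed
  have "norm v = norm (\<Sum>j<k. \<psi> j v *\<^sub>R x j)"
    using B v unfolding biorthogonal_upto_def by (subst biorthogonal_expansion) auto
  also have "\<dots> \<le> (\<Sum>j<k. \<bar>\<psi> j v\<bar>)"
    using B unfolding biorthogonal_upto_def by (auto intro!: order_trans[OF norm_sum] sum_mono)
  also have "\<dots> \<le> (\<Sum>j<k. 2 ^ j * norm (y - v))" using coeff by (intro sum_mono) auto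
  also have "\<dots> = (2 ^ k - 1) * norm (y - v)"
    by (induction k) (auto simp: algebra_simps)
  finally have "norm v \<le> (2 ^ k - 1) * norm (y - v)" .
  moreover have "1 \<le> norm (y - v) + norm v" using y norm_triangle_ineq[of "y - v" v] by simp
  ultimately have "1 \<le> 2 ^ k * norm (y - v)" by (simp add: algebra_simps)
  then show ?thesis by (simp add: field_simps)
qed

lemma biorthogonal_upto_extend:
  assumes B: "biorthogonal_upto k x \<psi>" and y: "norm y = 1" "\<forall>j<k. \<psi> j y = 0"
  obtains \<phi> where "biorthogonal_upto (Suc k) (x(k := y)) (\<psi>(k := \<phi>))"
proof -
  obtain \<phi> where \<phi>: "linear \<phi>" "\<And>u. \<bar>\<phi> u\<bar> \<le> norm u / (1 / 2 ^ k)" "\<phi> y = 1"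
    "\<And>v. v \<in> span (x ` {..<k}) \<Longrightarrow> \<phi> v = 0"
    using separating_functional[of "span (x ` {..<k})" "1 / 2 ^ k" y]
      biorthogonal_upto_distance[OF B y] by auto
  have "\<bar>\<phi> u\<bar> \<le> 2 ^ k * norm u" for u using \<phi>(2)[of u] by (simp add: mult.commute)
  moreover have "\<phi> (x j) = 0" if "j < k" for j using \<phi>(4) that by (simp add: span_base)
  ultimately have "biorthogonal_upto (Suc k) (x(k := y)) (\<psi>(k := \<phi>))"
    using B y \<phi> unfolding biorthogonal_upto_def by (auto simp: less_Suc_eq)
  then show ?thesis by (rule that)
qed

lemma sequence_by_extension:
  assumes base: "P 0 f0"
    and step: "\<And>n f. P n f \<Longrightarrow> \<exists>y. P (Suc n) (f(n := y))"
    and prefix: "\<And>n f g. P n f \<Longrightarrow> (\<And>j. j < n \<Longrightarrow> g j = f j) \<Longrightarrow> P n g"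
  obtains f where "\<And>n. P n f"
proof -
  have "\<exists>F. \<forall>n. P n (F n) \<and> (\<forall>j<n. F (Suc n) j = F n j)"
  proof (rule dependent_nat_choice)
    fix g n assume "P n g"
    then obtain y where "P (Suc n) (g(n := y))" using step by blast
    then show "\<exists>h. P (Suc n) h \<and> (\<forall>j<n. h j = g j)" by (intro exI[of _ "g(n := y)"]) auto
  qed (use base in blast)
  then obtain F where F: "\<And>n. P n (F n)" "\<And>n j. j < n \<Longrightarrow> F (Suc n) j = F n j" by blast
  define f where "f j = F (Suc j) j" for j
  have "f j = F n j" if "j < n" for j n
    using that
  proof (induction n)
    case (Suc n)
    then show ?case by (cases "j = n") (auto simp: f_def F(2))
  qed simp
  then show ?thesis using that prefix F(1) by metis
qed

lemma strictly_singular_small_biorthogonal_sequence: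
  assumes S: "strictly_singular S" and Y: "inf_subspace Y" and \<theta>: "\<And>j. \<theta> j > 0"
  obtains x \<psi> where "\<And>k. biorthogonal_upto k x \<psi>" "\<And>j. x j \<in> Y"
    "\<And>j. norm (blinfun_apply S (x j)) \<le> \<theta> j"
proof -
  define P where "P n p \<longleftrightarrow> biorthogonal_upto n (fst \<circ> p) (snd \<circ> p) \<and>
    (\<forall>j<n. fst (p j) \<in> Y \<and> norm (blinfun_apply S (fst (p j))) \<le> \<theta> j)"
    for n and p :: "nat \<Rightarrow> 'a \<times> ('a \<Rightarrow> real)"
  obtain p where p: "\<And>n. P n p"
  proof (rule sequence_by_extension[of P])
    show "P 0 (\<lambda>_. (0, \<lambda>_. 0))" unfolding P_def biorthogonal_upto_def by simp
  next
    fix n p assume "P n p"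
    then have B: "biorthogonal_upto n (fst \<circ> p) (snd \<circ> p)" unfolding P_def by blast
    define Y' where "Y' = Y \<inter> {u. \<forall>j<n. (snd \<circ> p) j u = 0}"
    have "inf_subspace Y'"
      unfolding Y'_def using B unfolding biorthogonal_upto_def
      by (intro inf_subspace_Int_kernels[OF Y, where M="\<lambda>j. 2 ^ j"]) auto
    then obtain y where y: "y \<in> Y'" "norm y = 1" "norm (blinfun_apply S y) \<le> \<theta> n"
      using strictly_singular_obtain_small_unit[OF S _ \<theta>] by blast
    then obtain \<phi> where "biorthogonal_upto (Suc n) ((fst \<circ> p)(n := y)) ((snd \<circ> p)(n := \<phi>))"
      using biorthogonal_upto_extend[OF B] unfolding Y'_def by blast
    moreover have "(fst \<circ> p)(n := y) = fst \<circ> p(n := (y, \<phi>))" "(snd \<circ> p)(n := \<phi>) = snd \<circ> p(n := (y, \<phi>))"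
      by (auto simp: fun_eq_iff)
    ultimately have "P (Suc n) (p(n := (y, \<phi>)))"
      using \<open>P n p\<close> y unfolding P_def Y'_def by (auto simp: less_Suc_eq)
    then show "\<exists>z. P (Suc n) (p(n := z))" by blast
  next
    fix n p q assume "P n p" "\<And>j. j < n \<Longrightarrow> q j = p j"
    then show "P n q" unfolding P_def biorthogonal_upto_def by simp
  qed blast
  show ?thesis
  proof (rule that[of "fst \<circ> p" "snd \<circ> p"])
    show "biorthogonal_upto k (fst \<circ> p) (snd \<circ> p)" for k using p unfolding P_def by blast
    show "(fst \<circ> p) j \<in> Y" "norm (blinfun_apply S ((fst \<circ> p) j)) \<le> \<theta> j" for j
      using p[of "Suc j"] unfolding P_def by auto
  qed
qed

lemma biorthogonal_sequence_inf_dim: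
  assumes B: "\<And>k. biorthogonal_upto k x \<psi>"
  shows "inf_dim (range x)"
proof -
  have bi: "\<psi> j (x i) = (if i = j then 1 else 0)" for i j
    using B[of "Suc (max i j)"] unfolding biorthogonal_upto_def by auto
  have "independent (range x)"
    unfolding dependent_def
  proof
    assume "\<exists>a\<in>range x. a \<in> span (range x - {a})"
    then obtain i where i: "x i \<in> span (range x - {x i})" by blast
    have "linear (\<psi> i)" using B[of "Suc i"] unfolding biorthogonal_upto_def by simp
    then have "subspace {u. \<psi> i u = 0}" by (rule linear_subspace_kernel)
    moreover have "range x - {x i} \<subseteq> {u. \<psi> i u = 0}" using bi by auto
    ultimately have "\<psi> i (x i) = 0" using i span_minimal by blast
    then show False using bi by simp
  qed
  moreover have "inj x" using bi by (intro injI) (metis zero_neq_one)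
  ultimately show ?thesis
    unfolding inf_dim_def using independent_span_bound finite_imageD[of x UNIV] by blast
qed

lemma span_range_subset_initial:
  fixes x :: "nat \<Rightarrow> 'a::real_vector"
  assumes "z \<in> span (range x)"
  shows "\<exists>k. z \<in> span (x ` {..<k})"
  using assms
proof (induction rule: span_induct_alt)
  case base
  then show ?case by (auto intro: span_0)
next
  case (step c u y)
  then obtain i k where "u = x i" "y \<in> span (x ` {..<k})" by auto
  moreover have "span (x ` {..<k}) \<subseteq> span (x ` {..<max k (Suc i)})"
    by (intro span_mono image_mono) auto
  moreover have "x i \<in> span (x ` {..<max k (Suc i)})" by (intro span_base) auto
  ultimately show ?case by (meson span_add span_scale subsetD)
qed

text \<open>With \<open>\<bar>\<psi> j z\<bar> \<le> 2^j \<parallel>z\<parallel>\<close>, the weights \<open>\<delta> / 2^(2j+1)\<close> leave a geometric series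
  summing to at most \<open>\<delta>\<close>.\<close>

lemma biorthogonal_sequence_span_bound:
  assumes B: "\<And>k. biorthogonal_upto k x \<psi>" and T: "linear T"
    and small: "\<And>j. norm (T (x j)) \<le> \<delta> / 2 ^ (2 * j + 1)"
    and z: "z \<in> span (range x)"
  shows "norm (T z) \<le> \<delta> * norm z"
proof -
  obtain k where "z \<in> span (x ` {..<k})" using span_range_subset_initial[OF z] by blast
  then have "z = (\<Sum>j<k. \<psi> j z *\<^sub>R x j)"
    using B[of k] unfolding biorthogonal_upto_def by (intro biorthogonal_expansion) auto
  then have "T z = T (\<Sum>j<k. \<psi> j z *\<^sub>R x j)" by (rule arg_cong)
  also have "\<dots> = (\<Sum>j<k. \<psi> j z *\<^sub>R T (x j))" by (simp add: linear_sum[OF T] linear_scale[OF T])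
  finally have Tz: "T z = (\<Sum>j<k. \<psi> j z *\<^sub>R T (x j))" .
  have "norm (T z) \<le> (\<Sum>j<k. norm (\<psi> j z *\<^sub>R T (x j)))" unfolding Tz by (rule norm_sum)
  also have "\<dots> = (\<Sum>j<k. \<bar>\<psi> j z\<bar> * norm (T (x j)))" by simp
  also have "\<dots> \<le> (\<Sum>j<k. (2 ^ j * norm z) * (\<delta> / 2 ^ (2 * j + 1)))"
    using B small unfolding biorthogonal_upto_def by (intro sum_mono mult_mono) auto
  also have "\<dots> = (\<delta> * norm z) * (\<Sum>j<k. 1 / 2 ^ Suc j)"
  proof -
    have "(2::real) ^ (2 * j + 1) = 2 ^ j * 2 ^ Suc j" for j by (simp flip: power_add)
    then show ?thesis unfolding sum_distrib_left by (intro sum.cong) auto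
  qed
  also have "\<dots> \<le> \<delta> * norm z"
  proof -
    have "(\<Sum>j<k. 1 / 2 ^ Suc j) = 1 - 1 / (2::real) ^ k"
      by (induction k) (auto simp: field_simps)
    moreover have "\<delta> \<ge> 0" using order_trans[OF norm_ge_zero small[of 0]] by simp
    ultimately show ?thesis by (simp add: mult_left_le)
  qed
  finally show ?thesis .
qed

lemma strictly_singular_small_on_subspace:
  assumes S: "strictly_singular S" and Y: "inf_subspace Y" and \<delta>: "\<delta> > 0"
  obtains Z where "inf_subspace Z" "Z \<subseteq> Y" "\<And>z. z \<in> Z \<Longrightarrow> norm (blinfun_apply S z) \<le> \<delta> * norm z"
proof -
  obtain x \<psi> where B: "\<And>k. biorthogonal_upto k x \<psi>" and xY: "\<And>j. x j \<in> Y"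
    and small: "\<And>j. norm (blinfun_apply S (x j)) \<le> \<delta> / 2 ^ (2 * j + 1)"
    using strictly_singular_small_biorthogonal_sequence[OF S Y, of "\<lambda>j. \<delta> / 2 ^ (2 * j + 1)"] \<delta>
    by auto
  define Z where "Z = closure (span (range x))"
  have "span (range x) \<subseteq> Y"
    using xY Y unfolding inf_subspace_def by (intro span_minimal) auto
  then have "Z \<subseteq> Y" using Y unfolding Z_def inf_subspace_def by (simp add: closure_minimal)
  moreover have "inf_subspace Z"
    using biorthogonal_sequence_inf_dim[OF B] closure_subset[of "span (range x)"] span_superset[of "range x"]
    unfolding inf_subspace_def inf_dim_def Z_def by (auto intro: subspace_closure)
  moreover have "linear (blinfun_apply S)"
    using blinfun.bounded_linear_right by (rule bounded_linear.linear)
  then have "Z \<subseteq> {z. norm (blinfun_apply S z) \<le> \<delta> * norm z}"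
    unfolding Z_def using biorthogonal_sequence_span_bound[OF B _ small]
    by (intro closure_minimal closed_Collect_le continuous_intros) auto
  ultimately show ?thesis using that by blast
qed

lemma strictly_singular_small_on_common_subspace:
  fixes F :: "('a::real_normed_vector \<Rightarrow>\<^sub>L 'b::real_normed_vector) set"
  assumes "finite F" "\<And>S. S \<in> F \<Longrightarrow> strictly_singular S" "inf_subspace Y" "\<delta> > 0"
  shows "\<exists>Z. inf_subspace Z \<and> Z \<subseteq> Y \<and> (\<forall>S\<in>F. \<forall>z\<in>Z. norm (blinfun_apply S z) \<le> \<delta> * norm z)"
  using assms
proof (induction F arbitrary: Y rule: finite_induct)
  case (insert S F)
  then obtain Z where "inf_subspace Z" "Z \<subseteq> Y" "\<forall>S\<in>F. \<forall>z\<in>Z. norm (blinfun_apply S z) \<le> \<delta> * norm z"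
    by blast
  moreover obtain Z' where "inf_subspace Z'" "Z' \<subseteq> Z" "\<And>z. z \<in> Z' \<Longrightarrow> norm (blinfun_apply S z) \<le> \<delta> * norm z"
    using strictly_singular_small_on_subspace insert.prems calculation(1) by blast
  ultimately show ?case by (intro exI[of _ Z']) blast
qed blast

section \<open>UALS-saturation\<close>

lemma compact_obtain_finite_net:
  fixes W :: "'a::metric_space set"
  assumes "compact W" "\<delta> > 0"
  obtains N where "N \<subseteq> W" "finite N" "\<And>B. B \<in> W \<Longrightarrow> \<exists>B'\<in>N. dist B' B < \<delta>"
proof -
  have "W \<subseteq> (\<Union>B\<in>W. ball B \<delta>)" using assms(2) by auto
  then obtain N where N: "N \<subseteq> W" "finite N" "W \<subseteq> (\<Union>B\<in>N. ball B \<delta>)"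
    using compactE_image[OF assms(1), of W "\<lambda>B. ball B \<delta>"] by auto
  show ?thesis
  proof (rule that[OF N(1,2)])
    fix B assume "B \<in> W"
    then have "B \<in> (\<Union>B'\<in>N. ball B' \<delta>)" using N(3) by blast
    then show "\<exists>B'\<in>N. dist B' B < \<delta>" by auto
  qed
qed

lemma norm_blinfun_diff_triangle:
  "norm (blinfun_apply (A - C) x) \<le> norm (blinfun_apply (A - B) x) + norm (B - C) * norm x"
proof -
  have "blinfun_apply (A - C) x = blinfun_apply (A - B) x + blinfun_apply (B - C) x"
    by (simp add: blinfun.diff_left)
  then show ?thesis
    using norm_triangle_ineq[of "blinfun_apply (A - B) x" "blinfun_apply (B - C) x"]
      norm_blinfun[of "B - C" x] by simp
qed

lemma almost_scalar_bound:
  fixes T R :: "'a::real_normed_vector \<Rightarrow> 'a"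
  assumes dec: "\<And>z. z \<in> Z \<Longrightarrow> T z = c *\<^sub>R z + R z"
    and R: "\<And>z. z \<in> Z \<Longrightarrow> norm (R z) \<le> \<eta> * norm z"
    and x0: "x0 \<in> Z" "norm x0 = 1" "norm (T x0) \<le> \<rho>"
    and z: "z \<in> Z"
  shows "norm (T z) \<le> (\<rho> + 2 * \<eta>) * norm z"
proof -
  have "\<bar>c\<bar> = norm (T x0 - R x0)" using dec[OF x0(1)] x0(2) by simp
  also have "\<dots> \<le> \<rho> + \<eta>" using norm_triangle_ineq4[of "T x0" "R x0"] R[OF x0(1)] x0 by simp
  finally have "\<bar>c\<bar> * norm z \<le> (\<rho> + \<eta>) * norm z" by (simp add: mult_right_mono)
  moreover have "norm (T z) \<le> \<bar>c\<bar> * norm z + norm (R z)"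
    using dec[OF z] norm_triangle_ineq[of "c *\<^sub>R z" "R z"] by simp
  ultimately show ?thesis using R[OF z] by (simp add: algebra_simps)
qed

lemma scalar_plus_strictly_singular_approximation:
  fixes c :: "('a::real_normed_vector \<Rightarrow>\<^sub>L 'a) \<Rightarrow> real" and s :: "('a \<Rightarrow>\<^sub>L 'a) \<Rightarrow> ('a \<Rightarrow>\<^sub>L 'a)"
    and A :: "'a \<Rightarrow>\<^sub>L 'a"
  assumes dec: "\<And>T. T = c T *\<^sub>R id_blinfun + s T" and ss: "\<And>T. strictly_singular (s T)"
    and W: "compact W" and \<epsilon>: "\<epsilon> > 0"
    and approx: "\<forall>x. norm x \<le> 1 \<longrightarrow> (\<exists>B\<in>W. norm (blinfun_apply (A - B) x) \<le> \<epsilon>)"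
    and Y: "inf_subspace Y"
  shows "\<exists>Z B. inf_subspace Z \<and> Z \<subseteq> Y \<and> B \<in> W \<and>
           (\<forall>z\<in>Z. norm (blinfun_apply (A - B) z) \<le> 2 * \<epsilon> * norm z)"
proof -
  define \<delta> where "\<delta> = \<epsilon> / 5"
  have \<delta>: "\<delta> > 0" using \<epsilon> by (simp add: \<delta>_def)
  obtain N where N: "N \<subseteq> W" "finite N" "\<And>B. B \<in> W \<Longrightarrow> \<exists>B'\<in>N. dist B' B < \<delta>"
    using compact_obtain_finite_net[OF W \<delta>] by blast
  have "\<exists>Z. inf_subspace Z \<and> Z \<subseteq> Y \<and>
      (\<forall>T\<in>s ` insert A N. \<forall>z\<in>Z. norm (blinfun_apply T z) \<le> \<delta> * norm z)"
    using N(2) ss by (intro strictly_singular_small_on_common_subspace[OF _ _ Y \<delta>]) auto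
  then obtain Z where Z: "inf_subspace Z" "Z \<subseteq> Y"
    and small: "\<forall>T\<in>s ` insert A N. \<forall>z\<in>Z. norm (blinfun_apply T z) \<le> \<delta> * norm z"
    by blast
  obtain x0 where x0: "x0 \<in> Z" "norm x0 = 1" using inf_subspace_obtain_unit[OF Z(1)] by blast
  obtain B where B: "B \<in> W" "norm (blinfun_apply (A - B) x0) \<le> \<epsilon>"
    using approx[rule_format, of x0] x0(2) by auto
  obtain B' where B': "B' \<in> N" "dist B' B < \<delta>" using N(3)[OF B(1)] by blast
  have "norm (B - B') < \<delta>" using B'(2) by (simp add: dist_norm norm_minus_commute)
  have near: "norm (blinfun_apply (A - B') x0) \<le> \<epsilon> + \<delta>"
    using norm_blinfun_diff_triangle[of A B' x0 B] B(2) \<open>norm (B - B') < \<delta>\<close> x0(2) by simp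
  have apply_dec: "blinfun_apply T u = c T *\<^sub>R u + blinfun_apply (s T) u" for T u
    using arg_cong[OF dec[of T], of "\<lambda>T. blinfun_apply T u"]
    by (simp add: blinfun.add_left blinfun.scaleR_left)
  have "norm (blinfun_apply (A - B') z) \<le> (\<epsilon> + \<delta> + 2 * (2 * \<delta>)) * norm z" if "z \<in> Z" for z
  proof (rule almost_scalar_bound[where T="blinfun_apply (A - B')" and c="c A - c B'"
        and R="\<lambda>z. blinfun_apply (s A) z - blinfun_apply (s B') z", OF _ _ x0 near that])
    show "blinfun_apply (A - B') z = (c A - c B') *\<^sub>R z + (blinfun_apply (s A) z - blinfun_apply (s B') z)"
      for z by (simp add: blinfun.diff_left apply_dec[of A] apply_dec[of B'] algebra_simps)
    show "norm (blinfun_apply (s A) z - blinfun_apply (s B') z) \<le> 2 * \<delta> * norm z" if "z \<in> Z" for z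
    proof -
      have "norm (blinfun_apply (s A) z) \<le> \<delta> * norm z" "norm (blinfun_apply (s B') z) \<le> \<delta> * norm z"
        using small that B'(1) by auto
      then show ?thesis
        using norm_triangle_ineq4[of "blinfun_apply (s A) z" "blinfun_apply (s B') z"] by simp
    qed
  qed
  moreover have "\<epsilon> + \<delta> + 2 * (2 * \<delta>) = 2 * \<epsilon>" unfolding \<delta>_def by simp
  ultimately show ?thesis using Z B'(1) N(1) by (intro exI[of _ Z] exI[of _ B']) auto
qed

theorem theorem5p8:
  assumes "\<forall>A :: 'a::banach \<Rightarrow>\<^sub>L 'a. \<exists>(c::real) S.
             A = c *\<^sub>R id_blinfun + S \<and> strictly_singular S"
  shows "UALS_saturated TYPE('a)"
proof -
  obtain c s where dec: "\<And>T :: 'a \<Rightarrow>\<^sub>L 'a. T = c T *\<^sub>R id_blinfun + s T"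
    and ss: "\<And>T. strictly_singular (s T)"
    using assms by metis
  show ?thesis
    unfolding UALS_saturated_def
  proof (intro exI[of _ "2::real"] conjI allI impI)
    fix W :: "('a \<Rightarrow>\<^sub>L 'a) set" and A \<epsilon> and Y :: "'a set"
    assume "convex W \<and> compact W \<and> \<epsilon> > 0 \<and>
      (\<forall>x::'a. norm x \<le> 1 \<longrightarrow> (\<exists>B\<in>W. norm (blinfun_apply (A - B) x) \<le> \<epsilon>))" "inf_subspace Y"
    then show "\<exists>Z B. inf_subspace Z \<and> Z \<subseteq> Y \<and> B \<in> W \<and>
        (\<forall>z\<in>Z. norm (blinfun_apply (A - B) z) \<le> 2 * \<epsilon> * norm z)"
      using scalar_plus_strictly_singular_approximation[OF dec ss] by blast
  qed simp
qed

end
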